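(* Let $S$ be a characteristic subset of $\mathbb{R}_{\ge0}$, let $X$ be an $\mathbb{R}_{\ge0}$-ultrametrizable topological space, and let $A$ be a closed subset of $X$. Then there exists a map $\Upsilon\colon\mathrm{Ult}(A;S)\to\mathrm{Ult}(X;S)$ such that: (B1) $\Upsilon$ is an isometric embedding: $\mathcal{UD}_X^S(\Upsilon(d_1),\Upsilon(d_2))=\mathcal{UD}_A^S(d_1,d_2)$ for all $d_1,d_2\in\mathrm{Ult}(A;S)$; (B2) $\Upsilon(d)|_{A\times A}=d$ for all $d\in\mathrm{Ult}(A;S)$; (B3) if $d_1,d_2\in\mathrm{Ult}(A;S)$ satisfy $d_1(a,b)\le d_2(a,b)$ for all $a,b\in A$, then $\Upsilon(d_1)(x,y)\le\Upsilon(d_2)(x,y)$ for all $x,y\in X$; (B4) $\Upsilon(d\lor e)=\Upsilon(d)\lor\Upsilon(e)$ for all $d,e\in\mathrm{Ult}(A;S)$. Moreover, if $X$ is completely metrizable, then $\Upsilon$ can be chosen to satisfy (B1)–(B4) and also (B5) if $d\in\mathrm{Ult}(A;S)$ is complete, then so is $\Upsilon(d)$.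
   Context: A subset $S\subseteq\mathbb{R}_{\ge0}$ is characteristic if $0\in S$ and for every $s>0$ there is $t\in S\setminus\{0\}$ with $t\le s$. For $S\subseteq\mathbb{R}_{\ge 0}$ with $0\in S$, an $S$-ultrametric on a set $Y$ is a map $d\colon Y\times Y\to S$ with $d(x,y)=0\iff x=y$, $d(x,y)=d(y,x)$ and $d(x,y)\le\max\{d(x,z),d(z,y)\}$. For a topological space $Y$, $\mathrm{Ult}(Y;S)$ is the set of $S$-ultrametrics on $Y$ generating the topology of $Y$ (via open balls); $Y$ is $\mathbb{R}_{\ge0}$-ultrametrizable if $\mathrm{Ult}(Y;\mathbb{R}_{\ge0})\ne\emptyset$. $(d\lor e)(x,y)=\max\{d(x,y),e(x,y)\}$. $\mathcal{UD}_Y^S(d,e)$ is the infimum of all $\epsilon\in S\sqcup\{\infty\}$ such that $d(x,y)\le\max\{e(x,y),\epsilon\}$ and $e(x,y)\le\max\{d(x,y),\epsilon\}$ for all $x,y\in Y$. A metric is complete if every Cauchy filter converges (equivalently, every Cauchy sequence converges). $A$ carries the subspace topology. *)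

theory Defs
  imports "HOL-Analysis.Analysis"
begin

type_synonym 'a dfun = "'a \<Rightarrow> 'a \<Rightarrow> real"

definition characteristic :: "real set \<Rightarrow> bool" where
  "characteristic S \<longleftrightarrow> S \<subseteq> {0..} \<and> 0 \<in> S \<and>
     (\<forall>s>0. \<exists>t\<in>S - {0}. t \<le> s)"

text \<open>An S-ultrametric on the set Y. A map Y x Y -> S is represented by a
  function that is extensional, i.e. takes the value 0 outside Y x Y.\<close>
definition S_ultrametric :: "real set \<Rightarrow> 'a set \<Rightarrow> 'a dfun \<Rightarrow> bool" where
  "S_ultrametric S Y d \<longleftrightarrow>
     (\<forall>x y. (x \<notin> Y \<or> y \<notin> Y) \<longrightarrow> d x y = 0) \<and>
     (\<forall>x\<in>Y. \<forall>y\<in>Y. d x y \<in> S) \<and>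
     (\<forall>x\<in>Y. \<forall>y\<in>Y. d x y = 0 \<longleftrightarrow> x = y) \<and>
     (\<forall>x\<in>Y. \<forall>y\<in>Y. d x y = d y x) \<and>
     (\<forall>x\<in>Y. \<forall>y\<in>Y. \<forall>z\<in>Y. d x y \<le> max (d x z) (d z y))"

definition generates_topology :: "'a topology \<Rightarrow> 'a dfun \<Rightarrow> bool" where
  "generates_topology T d \<longleftrightarrow>
     (\<forall>U. openin T U \<longleftrightarrow> U \<subseteq> topspace T \<and>
        (\<forall>x\<in>U. \<exists>r>0. {y \<in> topspace T. d x y < r} \<subseteq> U))"

definition Ult :: "'a topology \<Rightarrow> real set \<Rightarrow> 'a dfun set" where
  "Ult T S = {d. S_ultrametric S (topspace T) d \<and> generates_topology T d}"

definition ultrametrizable :: "'a topology \<Rightarrow> bool" where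
  "ultrametrizable T \<longleftrightarrow> Ult T {0..} \<noteq> {}"

definition dmax :: "'a dfun \<Rightarrow> 'a dfun \<Rightarrow> 'a dfun" where
  "dmax d e = (\<lambda>x y. max (d x y) (e x y))"

definition UD :: "real set \<Rightarrow> 'a set \<Rightarrow> 'a dfun \<Rightarrow> 'a dfun \<Rightarrow> ereal" where
  "UD S Y d e = Inf {\<epsilon> :: ereal. (\<epsilon> = \<infinity> \<or> (\<exists>s\<in>S. \<epsilon> = ereal s)) \<and>
      (\<forall>x\<in>Y. \<forall>y\<in>Y. ereal (d x y) \<le> max (ereal (e x y)) \<epsilon> \<and>
                      ereal (e x y) \<le> max (ereal (d x y)) \<epsilon>)}"

definition complete_on :: "'a set \<Rightarrow> 'a dfun \<Rightarrow> bool" where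
  "complete_on Y d \<longleftrightarrow>
     (\<forall>f :: nat \<Rightarrow> 'a. range f \<subseteq> Y \<longrightarrow>
        (\<forall>\<epsilon>>0. \<exists>N. \<forall>m\<ge>N. \<forall>n\<ge>N. d (f m) (f n) < \<epsilon>) \<longrightarrow>
        (\<exists>l\<in>Y. \<forall>\<epsilon>>0. \<exists>N. \<forall>n\<ge>N. d (f n) l < \<epsilon>))"

end

theory Submission
  imports Defs
begin

text \<open>Fix an ultrametric \<open>w\<close> for \<open>X\<close>. A point off the closed set \<open>A\<close> has positive
  \<open>w\<close>-distance to \<open>A\<close>, and this distance is constant on the ball of that radius; choosing one
  nearby point of \<open>A\<close> per such ball gives a retraction \<open>retr\<close> of \<open>X\<close> onto \<open>A\<close> that is
  locally constant off \<open>A\<close>. Collapsing \<open>A\<close> to a point gives the ultrametric \<open>collapse_dist\<close>,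
  which vanishes only on \<open>A \<times> A\<close> and the diagonal. With a monotone gauge \<open>f\<close> with values
  in \<open>S\<close> and \<open>0 < f t \<le> t\<close>, the extension is
  \<open>\<Upsilon> d x y = max (d (retr x) (retr y)) (f (collapse_dist x y))\<close>.
  The second term does not depend on \<open>d\<close> and vanishes on \<open>A \<times> A\<close>, so (B1)-(B4) are formal.
  Local constancy of \<open>retr\<close> and the bound \<open>w y (retr y) \<le> 2 distA y\<close> show that \<open>\<Upsilon> d\<close>
  generates the topology; a Cauchy sequence for \<open>\<Upsilon> d\<close> either approaches \<open>A\<close>, and converges
  by completeness of \<open>d\<close>, or stays away from \<open>A\<close>, and is then \<open>w\<close>-Cauchy.
  So (B5) only needs a complete \<open>w\<close>. Given a complete metric \<open>\<rho>\<close>, one is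
  \<open>u x y = 2\<^sup>-\<^sup>n\<close> for the first \<open>n\<close> at which \<open>x\<close> and \<open>y\<close> do not share a \<open>w\<close>-ball of
  radius and \<open>\<rho>\<close>-diameter at most \<open>2\<^sup>-\<^sup>n\<close>.\<close>

section \<open>Ultrametrics and the topologies they generate\<close>

lemma S_ultrametric_outside: "S_ultrametric S Y d \<Longrightarrow> x \<notin> Y \<or> y \<notin> Y \<Longrightarrow> d x y = 0"
  unfolding S_ultrametric_def by simp

lemma S_ultrametric_in_S: "S_ultrametric S Y d \<Longrightarrow> x \<in> Y \<Longrightarrow> y \<in> Y \<Longrightarrow> d x y \<in> S"
  unfolding S_ultrametric_def by simp

lemma S_ultrametric_eq_0_iff:
  "S_ultrametric S Y d \<Longrightarrow> x \<in> Y \<Longrightarrow> y \<in> Y \<Longrightarrow> d x y = 0 \<longleftrightarrow> x = y"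
  unfolding S_ultrametric_def by simp

lemma S_ultrametric_refl: "S_ultrametric S Y d \<Longrightarrow> d x x = 0"
  unfolding S_ultrametric_def by (cases "x \<in> Y") auto

lemma S_ultrametric_sym: "S_ultrametric S Y d \<Longrightarrow> d x y = d y x"
  unfolding S_ultrametric_def by (cases "x \<in> Y \<and> y \<in> Y") auto

lemma S_ultrametric_ultra:
  "S_ultrametric S Y d \<Longrightarrow> x \<in> Y \<Longrightarrow> y \<in> Y \<Longrightarrow> z \<in> Y \<Longrightarrow> d x y \<le> max (d x z) (d z y)"
  unfolding S_ultrametric_def by metis

lemma S_ultrametric_nonneg:
  assumes "S_ultrametric S Y d" "S \<subseteq> {0..}"
  shows "0 \<le> d x y"
proof (cases "x \<in> Y \<and> y \<in> Y")
  case True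
  then show ?thesis using S_ultrametric_in_S[OF assms(1)] assms(2) by force
qed (simp add: S_ultrametric_outside[OF assms(1)])

lemma S_ultrametric_le_max_extend:
  assumes "S_ultrametric S Y d" "S_ultrametric S Y e" "0 \<le> s"
    and "\<forall>x\<in>Y. \<forall>y\<in>Y. d x y \<le> max (e x y) s"
  shows "d x y \<le> max (e x y) s"
  using assms(3-) S_ultrametric_outside[OF assms(1)] S_ultrametric_outside[OF assms(2)]
  by (cases "x \<in> Y \<and> y \<in> Y") auto

lemma S_ultrametric_le_extend:
  assumes "S_ultrametric S Y d" "S_ultrametric S Y e" "\<forall>x\<in>Y. \<forall>y\<in>Y. d x y \<le> e x y"
  shows "d x y \<le> e x y"
  using assms(3-) S_ultrametric_outside[OF assms(1)] S_ultrametric_outside[OF assms(2)]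
  by (cases "x \<in> Y \<and> y \<in> Y") auto

lemma generates_topology_ball:
  assumes "generates_topology T d" "openin T U" "x \<in> U"
  obtains r where "r > 0" "{y \<in> topspace T. d x y < r} \<subseteq> U"
  using assms unfolding generates_topology_def by blast

lemma generates_topology_openinI:
  assumes "generates_topology T d" "U \<subseteq> topspace T"
    and "\<And>x. x \<in> U \<Longrightarrow> \<exists>r>0. {y \<in> topspace T. d x y < r} \<subseteq> U"
  shows "openin T U"
  using assms(1)[unfolded generates_topology_def, THEN spec, of U] assms(2,3) by blast

lemma generates_topology_openin_ball:
  assumes "S_ultrametric S (topspace T) d" "generates_topology T d" "x \<in> topspace T" "r > 0"
  shows "openin T {y \<in> topspace T. d x y < r}"
proof (rule generates_topology_openinI[OF assms(2)])
  fix y assume "y \<in> {y \<in> topspace T. d x y < r}"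
  then have y: "y \<in> topspace T" "d x y < r" by auto
  have "d x z < r" if "z \<in> topspace T" "d y z < r" for z
    using S_ultrametric_ultra[OF assms(1) assms(3) that(1) y(1)] y(2) that(2) by linarith
  then have "{z \<in> topspace T. d y z < r} \<subseteq> {y \<in> topspace T. d x y < r}"
    by blast
  then show "\<exists>r'>0. {z \<in> topspace T. d y z < r'} \<subseteq> {y \<in> topspace T. d x y < r}"
    using assms(4) by blast
qed auto

lemma generates_topology_transfer:
  assumes "generates_topology T d"
    and "\<And>x e. x \<in> topspace T \<Longrightarrow> e > 0 \<Longrightarrow> \<exists>\<eta>>0. \<forall>y\<in>topspace T. d' x y < \<eta> \<longrightarrow> d x y < e"
    and "\<And>x e. x \<in> topspace T \<Longrightarrow> e > 0 \<Longrightarrow> \<exists>\<eta>>0. \<forall>y\<in>topspace T. d x y < \<eta> \<longrightarrow> d' x y < e"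
  shows "generates_topology T d'"
  unfolding generates_topology_def
proof (intro allI iffI conjI ballI)
  fix U x assume U: "openin T U" and x: "x \<in> U"
  then have "x \<in> topspace T" using openin_subset by blast
  obtain r where "r > 0" "{y \<in> topspace T. d x y < r} \<subseteq> U"
    using generates_topology_ball[OF assms(1) U x] .
  with assms(2)[OF \<open>x \<in> topspace T\<close> \<open>r > 0\<close>]
  show "\<exists>r>0. {y \<in> topspace T. d' x y < r} \<subseteq> U" by blast
next
  fix U assume U: "U \<subseteq> topspace T \<and> (\<forall>x\<in>U. \<exists>r>0. {y \<in> topspace T. d' x y < r} \<subseteq> U)"
  show "openin T U"
  proof (rule generates_topology_openinI[OF assms(1)])
    fix x assume "x \<in> U"
    with U obtain r where "r > 0" "{y \<in> topspace T. d' x y < r} \<subseteq> U" by blast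
    with assms(3)[of x r] U \<open>x \<in> U\<close>
    show "\<exists>r>0. {y \<in> topspace T. d x y < r} \<subseteq> U" by blast
  qed (use U in blast)
qed (use openin_subset in blast)

definition Cauchy_wrt :: "'a dfun \<Rightarrow> (nat \<Rightarrow> 'a) \<Rightarrow> bool" where
  "Cauchy_wrt d y \<longleftrightarrow> (\<forall>\<epsilon>>0. \<exists>N. \<forall>m\<ge>N. \<forall>n\<ge>N. d (y m) (y n) < \<epsilon>)"

definition converges_wrt :: "'a dfun \<Rightarrow> (nat \<Rightarrow> 'a) \<Rightarrow> 'a \<Rightarrow> bool" where
  "converges_wrt d y l \<longleftrightarrow> (\<forall>\<epsilon>>0. \<exists>N. \<forall>n\<ge>N. d (y n) l < \<epsilon>)"

lemma complete_on_iff: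
  "complete_on Y d \<longleftrightarrow> (\<forall>y. range y \<subseteq> Y \<longrightarrow> Cauchy_wrt d y \<longrightarrow> (\<exists>l\<in>Y. converges_wrt d y l))"
  unfolding complete_on_def Cauchy_wrt_def converges_wrt_def ..

lemma limitin_imp_converges_wrt:
  assumes "S_ultrametric S (topspace T) d" "generates_topology T d" "limitin T y l sequentially"
  shows "converges_wrt d y l"
  unfolding converges_wrt_def
proof (intro allI impI)
  fix \<epsilon> :: real assume "\<epsilon> > 0"
  have l: "l \<in> topspace T" using assms(3) unfolding limitin_sequentially by blast
  then have "openin T {z \<in> topspace T. d l z < \<epsilon>}"
    using generates_topology_openin_ball[OF assms(1,2) _ \<open>\<epsilon> > 0\<close>] by blast
  moreover have "l \<in> {z \<in> topspace T. d l z < \<epsilon>}"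
    using l \<open>\<epsilon> > 0\<close> S_ultrametric_refl[OF assms(1)] by simp
  ultimately obtain N where "\<forall>n\<ge>N. y n \<in> {z \<in> topspace T. d l z < \<epsilon>}"
    using assms(3) unfolding limitin_sequentially by meson
  then show "\<exists>N. \<forall>n\<ge>N. d (y n) l < \<epsilon>" using S_ultrametric_sym[OF assms(1)] by auto
qed

lemma UD_cong:
  assumes "\<And>s. s \<in> S \<Longrightarrow>
      (\<forall>x\<in>Y. \<forall>y\<in>Y. d x y \<le> max (e x y) s \<and> e x y \<le> max (d x y) s) \<longleftrightarrow>
      (\<forall>x\<in>Y'. \<forall>y\<in>Y'. d' x y \<le> max (e' x y) s \<and> e' x y \<le> max (d' x y) s)"
  shows "UD S Y d e = UD S Y' d' e'"
proof -
  have "((\<epsilon> = \<infinity> \<or> (\<exists>s\<in>S. \<epsilon> = ereal s)) \<and>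
        (\<forall>x\<in>Y. \<forall>y\<in>Y. ereal (d x y) \<le> max (ereal (e x y)) \<epsilon> \<and>
                       ereal (e x y) \<le> max (ereal (d x y)) \<epsilon>)) \<longleftrightarrow>
        ((\<epsilon> = \<infinity> \<or> (\<exists>s\<in>S. \<epsilon> = ereal s)) \<and>
        (\<forall>x\<in>Y'. \<forall>y\<in>Y'. ereal (d' x y) \<le> max (ereal (e' x y)) \<epsilon> \<and>
                         ereal (e' x y) \<le> max (ereal (d' x y)) \<epsilon>))" for \<epsilon>
  proof (cases "\<exists>s\<in>S. \<epsilon> = ereal s")
    case True
    then obtain s where "s \<in> S" "\<epsilon> = ereal s" by blast
    then show ?thesis using assms[of s] by (simp flip: ereal_max)
  qed auto
  then show ?thesis unfolding UD_def by simp
qed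

lemma half_power_less:
  assumes "0 < (e::real)"
  obtains n where "(1/2::real)^n < e"
proof -
  have "\<exists>n. (1/2::real)^n < e" by (rule real_arch_pow_inv[OF assms]) simp
  then show ?thesis using that by blast
qed

lemma characteristic_gauge:
  assumes "characteristic S"
  obtains f where "mono f" "f 0 = 0" "\<And>t. 0 < t \<Longrightarrow> 0 < f t"
    "\<And>t. 0 \<le> t \<Longrightarrow> f t \<in> S" "\<And>t. 0 \<le> t \<Longrightarrow> f t \<le> t"
proof -
  have small: "\<exists>t. t \<in> S \<and> 0 < t \<and> t \<le> s" if "0 < s" for s
    using assms that unfolding characteristic_def by force
  obtain s where s: "\<And>n. s n \<in> S \<and> 0 < s n \<and> s n \<le> (1/2)^n" "\<And>n. s (Suc n) \<le> s n"
  proof -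
    have "\<exists>s. \<forall>n. (s n \<in> S \<and> 0 < s n \<and> s n \<le> (1/2::real)^n) \<and> s (Suc n) \<le> s n"
    proof (rule dependent_nat_choice)
      show "\<exists>t. t \<in> S \<and> 0 < t \<and> t \<le> (1/2::real)^0" using small[of 1] by simp
    next
      fix t n assume "t \<in> S \<and> 0 < t \<and> t \<le> (1/2::real)^n"
      then show "\<exists>t'. (t' \<in> S \<and> 0 < t' \<and> t' \<le> (1/2)^Suc n) \<and> t' \<le> t"
        using small[of "min t ((1/2)^Suc n)"] by auto
    qed
    then show ?thesis using that by blast
  qed
  have s_anti: "s n \<le> s m" if "m \<le> n" for m n
    using decseqD[OF decseq_SucI[of s, OF s(2)] that] .
  define N where "N t = (LEAST n. (1/2::real)^n \<le> t)" for t
  have N: "(1/2::real)^N t \<le> t" if "0 < t" for t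
  proof -
    obtain n where "(1/2::real)^n < t" using half_power_less[OF \<open>0 < t\<close>] .
    then show ?thesis unfolding N_def by (rule LeastI[OF less_imp_le])
  qed
  define f where "f t = (if t \<le> 0 then 0 else s (N t))" for t
  show ?thesis
  proof
    show "mono f"
    proof
      fix t t' :: real assume "t \<le> t'"
      show "f t \<le> f t'"
      proof (cases "t \<le> 0")
        case False
        then have "(1/2::real)^N t \<le> t'" using N[of t] \<open>t \<le> t'\<close> by linarith
        then have "N t' \<le> N t" unfolding N_def[of t'] by (rule Least_le)
        then show ?thesis using False \<open>t \<le> t'\<close> s_anti unfolding f_def by auto
      qed (use s(1) in \<open>auto simp: f_def less_imp_le\<close>)
    qed
    show "f t \<le> t" if "0 \<le> t" for t
      using that N[of t] s(1)[of "N t"] unfolding f_def by force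
  qed (use s(1) assms in \<open>auto simp: f_def characteristic_def\<close>)
qed

section \<open>A complete ultrametric on a completely metrizable space\<close>

locale metric_with_ultrametric = Metric_space M \<rho> for M :: "'a set" and \<rho> +
  fixes w :: "'a dfun"
  assumes w_ultrametric: "S_ultrametric {0..} M w" and w_generates: "generates_topology mtopology w"
begin

lemma w_refl: "w x x = 0"
  using S_ultrametric_refl[OF w_ultrametric] .

lemma w_sym: "w x y = w y x"
  using S_ultrametric_sym[OF w_ultrametric] .

lemma w_ultra: "x \<in> M \<Longrightarrow> y \<in> M \<Longrightarrow> z \<in> M \<Longrightarrow> w x y \<le> max (w x z) (w z y)"
  using S_ultrametric_ultra[OF w_ultrametric] .

definition close_at :: "nat \<Rightarrow> 'a \<Rightarrow> 'a \<Rightarrow> bool" where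
  "close_at n x y \<longleftrightarrow> (\<exists>t>0. t \<le> (1/2)^n \<and> w x y < t \<and>
      (\<forall>p\<in>M. \<forall>q\<in>M. w x p < t \<longrightarrow> w x q < t \<longrightarrow> \<rho> p q \<le> (1/2)^n))"

lemma close_at_sym:
  assumes "x \<in> M" "y \<in> M" "close_at n x y"
  shows "close_at n y x"
proof -
  obtain t where t: "t > 0" "t \<le> (1/2)^n" "w x y < t"
    "\<forall>p\<in>M. \<forall>q\<in>M. w x p < t \<longrightarrow> w x q < t \<longrightarrow> \<rho> p q \<le> (1/2)^n"
    using assms(3) unfolding close_at_def by blast
  have "w x p < t" if "p \<in> M" "w y p < t" for p
    using w_ultra[OF assms(1) that(1) assms(2)] t(3) that(2) by simp
  then show ?thesis unfolding close_at_def using t w_sym[of x y] by auto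
qed

lemma close_at_trans:
  assumes "x \<in> M" "y \<in> M" "z \<in> M" "close_at n x y" "close_at n y z"
  shows "close_at n x z"
proof -
  obtain t\<^sub>1 where t\<^sub>1: "t\<^sub>1 > 0" "t\<^sub>1 \<le> (1/2)^n" "w x y < t\<^sub>1"
    "\<forall>p\<in>M. \<forall>q\<in>M. w x p < t\<^sub>1 \<longrightarrow> w x q < t\<^sub>1 \<longrightarrow> \<rho> p q \<le> (1/2)^n"
    using assms(4) unfolding close_at_def by blast
  obtain t\<^sub>2 where t\<^sub>2: "t\<^sub>2 > 0" "t\<^sub>2 \<le> (1/2)^n" "w y z < t\<^sub>2"
    "\<forall>p\<in>M. \<forall>q\<in>M. w y p < t\<^sub>2 \<longrightarrow> w y q < t\<^sub>2 \<longrightarrow> \<rho> p q \<le> (1/2)^n"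
    using assms(5) unfolding close_at_def by blast
  have wxz: "w x z \<le> max (w x y) (w y z)" using w_ultra assms(1-3) by blast
  txt \<open>Meeting \<open>w\<close>-balls are nested, so the larger of the two witnessing balls, recentred
    at \<open>x\<close>, witnesses \<open>close_at n x z\<close>.\<close>
  show ?thesis
  proof (cases "t\<^sub>2 \<le> t\<^sub>1")
    case True
    then have "w x z < t\<^sub>1" using wxz t\<^sub>1(3) t\<^sub>2(3) by simp
    then show ?thesis unfolding close_at_def using t\<^sub>1 by blast
  next
    case False
    have "w y p < t\<^sub>2" if "p \<in> M" "w x p < t\<^sub>2" for p
      using w_ultra[OF assms(2) that(1) assms(1)] t\<^sub>1(3) False that(2) w_sym[of x y] by simp
    moreover have "w x z < t\<^sub>2" using wxz t\<^sub>1(3) t\<^sub>2(3) False by simp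
    ultimately show ?thesis unfolding close_at_def using t\<^sub>2 by blast
  qed
qed

lemma close_at_mono:
  assumes "m \<le> n" "close_at n x y"
  shows "close_at m x y"
proof -
  have "(1/2::real)^n \<le> (1/2)^m" using assms(1) by (simp add: power_decreasing)
  then show ?thesis using assms(2) unfolding close_at_def by (meson order_trans)
qed

lemma close_at_rho: "x \<in> M \<Longrightarrow> y \<in> M \<Longrightarrow> close_at n x y \<Longrightarrow> \<rho> x y \<le> (1/2)^n"
  unfolding close_at_def using w_refl by fastforce

lemma close_at_w: "close_at n x y \<Longrightarrow> w x y < (1/2)^n"
  unfolding close_at_def by fastforce

lemma close_at_nhd:
  assumes "x \<in> M"
  obtains t where "t > 0" "\<And>y. y \<in> M \<Longrightarrow> w x y < t \<Longrightarrow> close_at n x y"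
proof -
  have "x \<in> mball x ((1/2)^(n+2))" using assms by simp
  then obtain t\<^sub>0 where t\<^sub>0: "t\<^sub>0 > 0" "{y \<in> topspace mtopology. w x y < t\<^sub>0} \<subseteq> mball x ((1/2)^(n+2))"
    by (rule generates_topology_ball[OF w_generates openin_mball])
  define t where "t = min t\<^sub>0 ((1/2)^n)"
  have "\<rho> p q \<le> (1/2)^n" if "p \<in> M" "q \<in> M" "w x p < t" "w x q < t" for p q
  proof -
    have "\<rho> x p < (1/2)^(n+2)" "\<rho> x q < (1/2)^(n+2)" using t\<^sub>0(2) that unfolding t_def by auto
    then have "\<rho> p x + \<rho> x q < 2 * (1/2)^(n+2)" using commute[of p x] by simp
    also have "\<dots> \<le> (1/2)^n" by (simp add: power_add)
    finally show ?thesis using triangle[OF that(1) assms that(2)] by simp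
  qed
  moreover have "t > 0" "t \<le> (1/2)^n" using t\<^sub>0(1) unfolding t_def by auto
  ultimately show ?thesis using that[of t] unfolding close_at_def by blast
qed

lemma close_at_refl: "x \<in> M \<Longrightarrow> close_at n x x"
  using close_at_nhd[of x n] w_refl by metis

lemma not_close_at:
  assumes "x \<in> M" "y \<in> M" "x \<noteq> y"
  shows "\<exists>n. \<not> close_at n x y"
proof -
  have "0 < \<rho> x y" using assms by simp
  then obtain n where "(1/2::real)^n < \<rho> x y" by (rule half_power_less)
  then show ?thesis using close_at_rho[OF assms(1,2)] by (meson not_le)
qed

definition level_dist :: "'a dfun" where
  "level_dist x y = (if x \<in> M \<and> y \<in> M \<and> x \<noteq> y then (1/2)^(LEAST n. \<not> close_at n x y) else 0)"

lemma level_dist_less_iff: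
  assumes "x \<in> M" "y \<in> M"
  shows "level_dist x y < (1/2)^n \<longleftrightarrow> close_at n x y"
proof (cases "x = y")
  case True then show ?thesis using assms close_at_refl unfolding level_dist_def by simp
next
  case False
  define m where "m = (LEAST n. \<not> close_at n x y)"
  have "\<not> close_at m x y" unfolding m_def by (rule LeastI_ex[OF not_close_at[OF assms False]])
  then have "n < m \<longleftrightarrow> close_at n x y"
    using close_at_mono not_less_Least[of _ "\<lambda>n. \<not> close_at n x y"] unfolding m_def[symmetric]
    by (metis not_le)
  moreover have "level_dist x y = (1/2)^m" unfolding level_dist_def m_def using assms False by simp
  ultimately show ?thesis by (simp add: power_strict_decreasing_iff)
qed

lemma level_dist_ultrametric: "S_ultrametric {0..} M level_dist"
  unfolding S_ultrametric_def
proof (intro conjI ballI allI impI)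
  fix x y assume "x \<notin> M \<or> y \<notin> M" then show "level_dist x y = 0" unfolding level_dist_def by auto
next
  fix x y show "level_dist x y \<in> {0..}" unfolding level_dist_def by simp
next
  fix x y assume "x \<in> M" "y \<in> M"
  then show "level_dist x y = 0 \<longleftrightarrow> x = y" unfolding level_dist_def by simp
next
  fix x y assume "x \<in> M" "y \<in> M"
  then have "(\<lambda>n. \<not> close_at n x y) = (\<lambda>n. \<not> close_at n y x)" using close_at_sym by blast
  then show "level_dist x y = level_dist y x" unfolding level_dist_def by auto
next
  fix x y z assume xyz: "x \<in> M" "y \<in> M" "z \<in> M"
  show "level_dist x y \<le> max (level_dist x z) (level_dist z y)"
  proof (cases "x = y")
    case True then show ?thesis unfolding level_dist_def by (simp add: le_max_iff_disj)
  next
    case False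
    define m where "m = (LEAST n. \<not> close_at n x y)"
    have m: "level_dist x y = (1/2)^m" unfolding level_dist_def m_def using xyz False by simp
    show ?thesis
    proof (rule ccontr)
      assume "\<not> ?thesis"
      then have "level_dist x z < (1/2)^m" "level_dist z y < (1/2)^m" using m by auto
      then have "close_at m x z" "close_at m z y" using level_dist_less_iff xyz by auto
      then have "level_dist x y < (1/2)^m" using close_at_trans level_dist_less_iff xyz by blast
      then show False using m by simp
    qed
  qed
qed

lemma level_dist_generates: "generates_topology mtopology level_dist"
proof (rule generates_topology_transfer[OF w_generates])
  fix x and e :: real assume x: "x \<in> topspace mtopology" and "e > 0"
  then obtain n where n: "(1/2::real)^n < e" using half_power_less by blast
  have "w x y < e" if "y \<in> topspace mtopology" "level_dist x y < (1/2)^n" for y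
    using that x level_dist_less_iff close_at_w n by fastforce
  moreover have "(0::real) < (1/2)^n" by simp
  ultimately show "\<exists>\<eta>>0. \<forall>y\<in>topspace mtopology. level_dist x y < \<eta> \<longrightarrow> w x y < e"
    by blast
  obtain t where t: "t > 0" "\<And>y. y \<in> M \<Longrightarrow> w x y < t \<Longrightarrow> close_at n x y"
    using close_at_nhd x by auto
  have "level_dist x y < e" if "y \<in> topspace mtopology" "w x y < t" for y
  proof -
    have "level_dist x y < (1/2)^n" using t(2) that x level_dist_less_iff by simp
    then show ?thesis using n by simp
  qed
  then show "\<exists>\<eta>>0. \<forall>y\<in>topspace mtopology. w x y < \<eta> \<longrightarrow> level_dist x y < e"
    using t(1) by blast
qed

lemma level_dist_Cauchy_imp_MCauchy:
  assumes "range y \<subseteq> M" "Cauchy_wrt level_dist y"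
  shows "MCauchy y"
  unfolding MCauchy_def
proof (intro conjI allI impI)
  fix \<epsilon> :: real assume "\<epsilon> > 0"
  then obtain k where k: "(1/2::real)^k < \<epsilon>" using half_power_less by blast
  have "(0::real) < (1/2)^k" by simp
  then obtain N where N: "\<forall>m\<ge>N. \<forall>n\<ge>N. level_dist (y m) (y n) < (1/2)^k"
    using assms(2) unfolding Cauchy_wrt_def by blast
  have "\<rho> (y m) (y n) < \<epsilon>" if "m \<ge> N" "n \<ge> N" for m n
    using N that assms(1) level_dist_less_iff close_at_rho k by (meson le_less_trans range_subsetD)
  then show "\<exists>N. \<forall>n n'. N \<le> n \<longrightarrow> N \<le> n' \<longrightarrow> \<rho> (y n) (y n') < \<epsilon>" by blast
qed (use assms in blast)

lemma complete_on_level_dist: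
  assumes "mcomplete"
  shows "complete_on M level_dist"
  unfolding complete_on_iff
proof (intro allI impI)
  fix y assume "range y \<subseteq> M" "Cauchy_wrt level_dist y"
  then obtain l where "limitin mtopology y l sequentially"
    using assms level_dist_Cauchy_imp_MCauchy unfolding mcomplete_def by blast
  moreover have "l \<in> M" using calculation unfolding limitin_sequentially by simp
  ultimately show "\<exists>l\<in>M. converges_wrt level_dist y l"
    using limitin_imp_converges_wrt[OF _ level_dist_generates] level_dist_ultrametric by auto
qed

end

lemma completely_metrizable_complete_ultrametric:
  assumes "w \<in> Ult X {0..}" "completely_metrizable_space X"
  obtains u where "u \<in> Ult X {0..}" "complete_on (topspace X) u"
proof -
  obtain M \<rho> where M: "Metric_space M \<rho>" "Metric_space.mcomplete M \<rho>" "X = Metric_space.mtopology M \<rho>"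
    using assms(2) unfolding completely_metrizable_space_def by blast
  have "metric_with_ultrametric M \<rho> w"
    by (rule metric_with_ultrametric.intro[OF M(1)])
      (use M assms(1) Metric_space.topspace_mtopology[OF M(1)] in
        \<open>auto simp: metric_with_ultrametric_axioms_def Ult_def\<close>)
  then interpret metric_with_ultrametric M \<rho> w .
  show ?thesis
    using that level_dist_ultrametric level_dist_generates complete_on_level_dist M unfolding Ult_def
    by auto
qed

section \<open>Extending ultrametrics from a closed subset\<close>

locale ultrametric_retraction =
  fixes X :: "'a topology" and w :: "'a dfun" and A :: "'a set"
  assumes w_ultrametric: "S_ultrametric {0..} (topspace X) w"
    and w_generates: "generates_topology X w"
    and closed_A: "closedin X A"
begin

lemma A_subset: "A \<subseteq> topspace X"
  using closed_A closedin_subset by blast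

lemma Ult_subtopology_A_iff:
  "d \<in> Ult (subtopology X A) S \<longleftrightarrow> S_ultrametric S A d \<and> generates_topology (subtopology X A) d"
  using A_subset unfolding Ult_def by (simp add: Int_absorb1)

lemma Ult_A_S_ultrametric: "d \<in> Ult (subtopology X A) S \<Longrightarrow> S_ultrametric S A d"
  using Ult_subtopology_A_iff by blast

lemma w_nonneg: "0 \<le> w x y"
  using S_ultrametric_nonneg[OF w_ultrametric] by simp

lemma w_refl: "w x x = 0"
  using S_ultrametric_refl[OF w_ultrametric] .

lemma w_sym: "w x y = w y x"
  using S_ultrametric_sym[OF w_ultrametric] .

lemma w_ultra: "x \<in> topspace X \<Longrightarrow> y \<in> topspace X \<Longrightarrow> z \<in> topspace X \<Longrightarrow> w x y \<le> max (w x z) (w z y)"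
  using S_ultrametric_ultra[OF w_ultrametric] .

lemma w_pos: "x \<in> topspace X \<Longrightarrow> y \<in> topspace X \<Longrightarrow> x \<noteq> y \<Longrightarrow> 0 < w x y"
  using S_ultrametric_eq_0_iff[OF w_ultrametric] w_nonneg by (metis order_le_less)

text \<open>For empty \<open>A\<close> the distance is set to \<open>1\<close>, so that \<open>distA\<close> is positive exactly off \<open>A\<close>.\<close>

definition distA :: "'a \<Rightarrow> real" where
  "distA x = (if A = {} then 1 else Inf ((\<lambda>a. w x a) ` A))"

lemma distA_le: "a \<in> A \<Longrightarrow> distA x \<le> w x a"
proof -
  have "bdd_below ((\<lambda>a. w x a) ` A)" by (rule bdd_belowI[where m=0]) (auto simp: w_nonneg)
  then show "a \<in> A \<Longrightarrow> distA x \<le> w x a" unfolding distA_def by (auto intro: cInf_lower)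
qed

lemma distA_nonneg: "0 \<le> distA x"
  unfolding distA_def using w_nonneg by (auto intro: cInf_greatest)

lemma distA_eq_0: "a \<in> A \<Longrightarrow> distA a = 0"
  using distA_le[of a a] distA_nonneg[of a] w_refl[of a] by simp

lemma distA_pos:
  assumes "x \<in> topspace X" "x \<notin> A"
  shows "0 < distA x"
proof (cases "A = {}")
  case True
  then show ?thesis unfolding distA_def by simp
next
  case False
  have "openin X (topspace X - A)" using closed_A unfolding closedin_def by blast
  moreover have "x \<in> topspace X - A" using assms by blast
  ultimately obtain r where r: "r > 0" "{y \<in> topspace X. w x y < r} \<subseteq> topspace X - A"
    by (rule generates_topology_ball[OF w_generates])
  have "r \<le> w x a" if "a \<in> A" for a
  proof (rule ccontr)
    assume "\<not> r \<le> w x a"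
    then have "a \<in> {y \<in> topspace X. w x y < r}" using that A_subset by auto
    then show False using r(2) that by blast
  qed
  then have "r \<le> distA x" unfolding distA_def using False by (auto intro: cInf_greatest)
  then show ?thesis using r by simp
qed

lemma distA_ultra:
  assumes "x \<in> topspace X" "z \<in> topspace X"
  shows "distA x \<le> max (w x z) (distA z)"
proof (cases "A = {}")
  case True
  then show ?thesis unfolding distA_def by simp
next
  case False
  show ?thesis
  proof (rule ccontr)
    assume contra: "\<not> ?thesis"
    then have "Inf ((\<lambda>a. w z a) ` A) < distA x" unfolding distA_def using False by auto
    then obtain a where a: "a \<in> A" "w z a < distA x"
      using cInf_lessD[of "(\<lambda>a. w z a) ` A"] False by auto
    have "w x a \<le> max (w x z) (w z a)" using w_ultra assms a A_subset by blast
    then show False using contra a distA_le[OF a(1), of x] by auto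
  qed
qed

lemma distA_near:
  assumes "x \<in> topspace X" "x \<notin> A" "A \<noteq> {}"
  obtains a where "a \<in> A" "w x a < 2 * distA x"
proof -
  have "Inf ((\<lambda>a. w x a) ` A) < 2 * distA x"
    using distA_pos[OF assms(1,2)] assms(3) unfolding distA_def by auto
  then show ?thesis using cInf_lessD[of "(\<lambda>a. w x a) ` A"] assms(3) that by auto
qed

lemma distA_eq_if_close:
  assumes "x \<in> topspace X" "y \<in> topspace X" "w x y < distA x"
  shows "distA y = distA x"
  using distA_ultra[OF assms(1,2)] distA_ultra[OF assms(2,1)] assms(3) w_sym[of x y] by auto

definition ball_off_A :: "'a \<Rightarrow> 'a set" where
  "ball_off_A y = {z \<in> topspace X. w y z < distA y}"

lemma ball_off_A_eq:
  assumes "y \<in> topspace X" "z \<in> topspace X" "w y z < distA y"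
  shows "ball_off_A z = ball_off_A y"
proof -
  have "w z v < distA y \<longleftrightarrow> w y v < distA y" if "v \<in> topspace X" for v
    using w_ultra[OF assms(2) that assms(1)] w_ultra[OF assms(1) that assms(2)] w_sym[of y z] assms(3)
    by auto
  then show ?thesis unfolding ball_off_A_def distA_eq_if_close[OF assms] by auto
qed

text \<open>Off \<open>A\<close>, the chosen point depends only on the ball \<open>ball_off_A y\<close>; this makes
  \<open>retr\<close> locally constant there.\<close>

definition retr :: "'a \<Rightarrow> 'a" where
  "retr y = (if y \<in> A then y else (SOME a. a \<in> A \<and> (\<forall>z\<in>ball_off_A y. w z a \<le> 2 * distA z)))"

lemma retr_id: "y \<in> A \<Longrightarrow> retr y = y"
  unfolding retr_def by simp

lemma retr_in_A_close:
  assumes "y \<in> topspace X" "A \<noteq> {}"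
  shows "retr y \<in> A \<and> w y (retr y) \<le> 2 * distA y"
proof (cases "y \<in> A")
  case True then show ?thesis using retr_id w_refl distA_nonneg by simp
next
  case False
  obtain a where a: "a \<in> A" "w y a < 2 * distA y" using distA_near[OF assms(1) False assms(2)] .
  have "w z a \<le> 2 * distA z" if z: "z \<in> ball_off_A y" for z
  proof -
    have zX: "z \<in> topspace X" and wz: "w y z < distA y" using z unfolding ball_off_A_def by auto
    have "w z a \<le> max (w z y) (w y a)" using w_ultra zX assms(1) a A_subset by blast
    then show ?thesis using wz a w_sym[of z y] distA_nonneg[of y] distA_eq_if_close[OF assms(1) zX wz]
      by auto
  qed
  then have "\<exists>a. a \<in> A \<and> (\<forall>z\<in>ball_off_A y. w z a \<le> 2 * distA z)" using a by blast
  from someI_ex[OF this] have "retr y \<in> A \<and> (\<forall>z\<in>ball_off_A y. w z (retr y) \<le> 2 * distA z)"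
    unfolding retr_def using False by simp
  moreover have "y \<in> ball_off_A y"
    unfolding ball_off_A_def using assms(1) w_refl distA_pos[OF assms(1) False] by simp
  ultimately show ?thesis by blast
qed

lemma retr_locally_constant:
  assumes "x \<in> topspace X" "x \<notin> A" "y \<in> topspace X" "w x y < distA x"
  shows "retr y = retr x"
proof -
  have "y \<notin> A"
    using distA_eq_if_close[OF assms(1,3,4)] distA_eq_0 distA_pos[OF assms(1,2)] by auto
  then show ?thesis using assms(2) ball_off_A_eq[OF assms(1,3,4)] unfolding retr_def by simp
qed

definition collapse_dist :: "'a dfun" where
  "collapse_dist x y = min (w x y) (max (distA x) (distA y))"

lemma collapse_dist_nonneg: "0 \<le> collapse_dist x y"
  unfolding collapse_dist_def using w_nonneg distA_nonneg by (simp add: le_max_iff_disj)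

lemma collapse_dist_le_w: "collapse_dist x y \<le> w x y"
  unfolding collapse_dist_def by simp

lemma collapse_dist_sym: "collapse_dist x y = collapse_dist y x"
  unfolding collapse_dist_def using w_sym by (simp add: max.commute)

lemma collapse_dist_refl: "collapse_dist x x = 0"
  unfolding collapse_dist_def using w_refl distA_nonneg by simp

lemma collapse_dist_ultra:
  assumes "x \<in> topspace X" "y \<in> topspace X" "z \<in> topspace X"
  shows "collapse_dist x y \<le> max (collapse_dist x z) (collapse_dist z y)"
proof -
  have "w x y \<le> max (w x z) (w z y)" using w_ultra assms by blast
  moreover have "distA x \<le> max (w x z) (distA z)" using distA_ultra assms by blast
  moreover have "distA y \<le> max (w z y) (distA z)" using distA_ultra[OF assms(2,3)] w_sym[of y z] by simp
  ultimately show ?thesis unfolding collapse_dist_def by linarith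
qed

lemma collapse_dist_pos:
  assumes "x \<in> topspace X" "y \<in> topspace X" "x \<noteq> y" "x \<notin> A \<or> y \<notin> A"
  shows "0 < collapse_dist x y"
proof -
  have "0 < max (distA x) (distA y)" using assms distA_pos distA_nonneg by (metis less_max_iff_disj)
  then show ?thesis unfolding collapse_dist_def using w_pos[OF assms(1-3)] by simp
qed

lemma collapse_dist_on_A: "a \<in> A \<Longrightarrow> b \<in> A \<Longrightarrow> collapse_dist a b = 0"
  unfolding collapse_dist_def using distA_eq_0 w_nonneg[of a b] by simp

lemma collapse_dist_eq_w: "collapse_dist x y < distA x \<Longrightarrow> collapse_dist x y = w x y"
  unfolding collapse_dist_def by (simp add: min_def max_def split: if_splits)

end

locale ultrametric_extension = ultrametric_retraction X w A
  for X :: "'a topology" and w A +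
  fixes S :: "real set" and f :: "real \<Rightarrow> real"
  assumes characteristic_S: "characteristic S"
    and f_mono: "mono f" and f_0: "f 0 = 0" and f_pos: "\<And>t. 0 < t \<Longrightarrow> 0 < f t"
    and f_in_S: "\<And>t. 0 \<le> t \<Longrightarrow> f t \<in> S" and f_le: "\<And>t. 0 \<le> t \<Longrightarrow> f t \<le> t"
begin

lemma S_nonneg: "S \<subseteq> {0..}" and zero_in_S: "0 \<in> S"
  using characteristic_S unfolding characteristic_def by auto

lemma f_less_imp_less: "f s < f t \<Longrightarrow> s < t"
  by (erule mono_strict_invE[OF f_mono])

lemma f_collapse_dist_le_w: "f (collapse_dist x y) \<le> w x y"
  using f_le[OF collapse_dist_nonneg] collapse_dist_le_w order_trans by blast

definition extend :: "'a dfun \<Rightarrow> 'a dfun" where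
  "extend d x y = (if x \<in> topspace X \<and> y \<in> topspace X
     then max (d (retr x) (retr y)) (f (collapse_dist x y)) else 0)"

lemma extend_eq:
  "x \<in> topspace X \<Longrightarrow> y \<in> topspace X \<Longrightarrow> extend d x y = max (d (retr x) (retr y)) (f (collapse_dist x y))"
  unfolding extend_def by simp

lemma extend_on_A:
  assumes "S_ultrametric S A d" "a \<in> A" "b \<in> A"
  shows "extend d a b = d a b"
  using assms A_subset retr_id collapse_dist_on_A f_0 S_ultrametric_nonneg[OF assms(1) S_nonneg, of a b]
  unfolding extend_def by auto

lemma extend_mono:
  assumes "S_ultrametric S A d" "S_ultrametric S A e" "\<forall>a\<in>A. \<forall>b\<in>A. d a b \<le> e a b"
    and "x \<in> topspace X" "y \<in> topspace X"
  shows "extend d x y \<le> extend e x y"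
  using S_ultrametric_le_extend[OF assms(1-3), of "retr x" "retr y"]
  unfolding extend_eq[OF assms(4,5)] by linarith

lemma extend_dmax: "extend (dmax d e) = dmax (extend d) (extend e)"
  unfolding extend_def dmax_def by (intro ext) auto

lemma UD_extend:
  assumes "S_ultrametric S A d" "S_ultrametric S A e"
  shows "UD S (topspace X) (extend d) (extend e) = UD S A d e"
proof (rule UD_cong)
  fix s assume "s \<in> S"
  then have "0 \<le> s" using S_nonneg by auto
  show "(\<forall>x\<in>topspace X. \<forall>y\<in>topspace X.
          extend d x y \<le> max (extend e x y) s \<and> extend e x y \<le> max (extend d x y) s) \<longleftrightarrow>
        (\<forall>a\<in>A. \<forall>b\<in>A. d a b \<le> max (e a b) s \<and> e a b \<le> max (d a b) s)"
  proof
    assume "\<forall>x\<in>topspace X. \<forall>y\<in>topspace X.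
      extend d x y \<le> max (extend e x y) s \<and> extend e x y \<le> max (extend d x y) s"
    then show "\<forall>a\<in>A. \<forall>b\<in>A. d a b \<le> max (e a b) s \<and> e a b \<le> max (d a b) s"
      using A_subset extend_on_A[OF assms(1)] extend_on_A[OF assms(2)] by (metis subsetD)
  next
    assume "\<forall>a\<in>A. \<forall>b\<in>A. d a b \<le> max (e a b) s \<and> e a b \<le> max (d a b) s"
    then have "d p q \<le> max (e p q) s" "e p q \<le> max (d p q) s" for p q
      using S_ultrametric_le_max_extend[OF assms(1,2) \<open>0 \<le> s\<close>]
        S_ultrametric_le_max_extend[OF assms(2,1) \<open>0 \<le> s\<close>] by blast+
    then show "\<forall>x\<in>topspace X. \<forall>y\<in>topspace X.
      extend d x y \<le> max (extend e x y) s \<and> extend e x y \<le> max (extend d x y) s"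
      unfolding extend_def by (smt (verit))
  qed
qed

lemma S_ultrametric_extend:
  assumes "S_ultrametric S A d"
  shows "S_ultrametric S (topspace X) (extend d)"
  unfolding S_ultrametric_def
proof (intro conjI ballI allI impI)
  fix x y assume "x \<notin> topspace X \<or> y \<notin> topspace X"
  then show "extend d x y = 0" unfolding extend_def by auto
next
  fix x y assume xy: "x \<in> topspace X" "y \<in> topspace X"
  have "d (retr x) (retr y) \<in> S"
  proof (cases "A = {}")
    case True then show ?thesis using S_ultrametric_outside[OF assms] zero_in_S by auto
  next
    case False then show ?thesis using retr_in_A_close xy S_ultrametric_in_S[OF assms] by blast
  qed
  then show "extend d x y \<in> S"
    using f_in_S[OF collapse_dist_nonneg] unfolding extend_eq[OF xy] by (simp add: max_def)
  show "extend d x y = 0 \<longleftrightarrow> x = y"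
  proof
    assume "extend d x y = 0"
    then have zero: "d (retr x) (retr y) \<le> 0" "f (collapse_dist x y) \<le> 0"
      unfolding extend_eq[OF xy] by auto
    show "x = y"
    proof (cases "x \<in> A \<and> y \<in> A")
      case True
      then have "d x y = 0" using zero(1) retr_id S_ultrametric_nonneg[OF assms S_nonneg, of x y] by simp
      then show ?thesis using True S_ultrametric_eq_0_iff[OF assms] by blast
    next
      case False
      then show ?thesis using zero(2) f_pos collapse_dist_pos[OF xy] by (meson not_le)
    qed
  qed (simp add: extend_def collapse_dist_refl f_0 S_ultrametric_refl[OF assms])
next
  fix x y
  show "extend d x y = extend d y x"
    unfolding extend_def using collapse_dist_sym S_ultrametric_sym[OF assms] by auto
next
  fix x y z assume xyz: "x \<in> topspace X" "y \<in> topspace X" "z \<in> topspace X"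
  have "d (retr x) (retr y) \<le> max (d (retr x) (retr z)) (d (retr z) (retr y))"
  proof (cases "A = {}")
    case True then show ?thesis using S_ultrametric_outside[OF assms] by auto
  next
    case False then show ?thesis using retr_in_A_close xyz S_ultrametric_ultra[OF assms] by blast
  qed
  moreover have "f (collapse_dist x y) \<le> max (f (collapse_dist x z)) (f (collapse_dist z y))"
    using monoD[OF f_mono collapse_dist_ultra[OF xyz]] by (simp add: max_of_mono[OF f_mono])
  ultimately show "extend d x y \<le> max (extend d x z) (extend d z y)"
    unfolding extend_eq[OF xyz(1,2)] extend_eq[OF xyz(1,3)] extend_eq[OF xyz(3,2)] by linarith
qed

lemma w_small_imp_small_on_A:
  assumes "d \<in> Ult (subtopology X A) S" "a \<in> A" "e > 0"
  obtains \<eta> where "\<eta> > 0" "\<And>b. b \<in> A \<Longrightarrow> w a b < \<eta> \<Longrightarrow> d a b < e"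
proof -
  have d: "S_ultrametric S A d" "generates_topology (subtopology X A) d"
    using assms(1) Ult_subtopology_A_iff by blast+
  have "openin (subtopology X A) {b \<in> topspace (subtopology X A). d a b < e}"
    by (rule generates_topology_openin_ball) (use d assms A_subset in \<open>auto simp: Int_absorb1\<close>)
  then obtain V where V: "openin X V" "{b \<in> A. d a b < e} = V \<inter> A"
    unfolding openin_subtopology using A_subset by (auto simp: Int_absorb1)
  have "a \<in> V" using V assms S_ultrametric_refl[OF d(1)] by auto
  then obtain \<eta> where "\<eta> > 0" "{b \<in> topspace X. w a b < \<eta>} \<subseteq> V"
    using generates_topology_ball[OF w_generates V(1)] by blast
  then show ?thesis using that V(2) A_subset by blast
qed

lemma small_on_A_imp_w_small:
  assumes "d \<in> Ult (subtopology X A) S" "a \<in> A" "e > 0"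
  obtains \<eta> where "\<eta> > 0" "\<And>b. b \<in> A \<Longrightarrow> d a b < \<eta> \<Longrightarrow> w a b < e"
proof -
  have d: "generates_topology (subtopology X A) d"
    using assms(1) Ult_subtopology_A_iff by auto
  have "a \<in> topspace X" using assms A_subset by auto
  then have "openin X {b \<in> topspace X. w a b < e}"
    using generates_topology_openin_ball[OF w_ultrametric w_generates _ assms(3)] by blast
  then have "openin (subtopology X A) (A \<inter> {b \<in> topspace X. w a b < e})"
    by (rule openin_subtopology_Int2)
  moreover have "a \<in> A \<inter> {b \<in> topspace X. w a b < e}" using assms A_subset w_refl by auto
  ultimately obtain \<eta> where \<eta>: "\<eta> > 0"
    "{b \<in> topspace (subtopology X A). d a b < \<eta>} \<subseteq> A \<inter> {b \<in> topspace X. w a b < e}"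
    by (rule generates_topology_ball[OF d])
  show ?thesis
  proof (rule that[OF \<eta>(1)])
    fix b assume "b \<in> A" "d a b < \<eta>"
    then show "w a b < e" using \<eta>(2) A_subset by auto
  qed
qed

lemma extend_small_if_w_small:
  assumes d: "d \<in> Ult (subtopology X A) S" and x: "x \<in> topspace X" and e: "e > 0"
  obtains \<eta> where "\<eta> > 0" "\<And>y. y \<in> topspace X \<Longrightarrow> w x y < \<eta> \<Longrightarrow> extend d x y < e"
proof (cases "x \<in> A")
  case False
  have "extend d x y < e" if y: "y \<in> topspace X" "w x y < min e (distA x)" for y
  proof -
    have "retr y = retr x" using retr_locally_constant[OF x False y(1)] y(2) by simp
    then have "d (retr x) (retr y) = 0" using S_ultrametric_refl[OF Ult_A_S_ultrametric[OF d]] by simp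
    then show ?thesis using f_collapse_dist_le_w[of x y] e y unfolding extend_eq[OF x y(1)] by simp
  qed
  moreover have "min e (distA x) > 0" using distA_pos[OF x False] e by simp
  ultimately show ?thesis using that by blast
next
  case True
  obtain \<eta> where \<eta>: "\<eta> > 0" "\<And>b. b \<in> A \<Longrightarrow> w x b < \<eta> \<Longrightarrow> d x b < e"
    using w_small_imp_small_on_A[OF d True e] by blast
  have "extend d x y < e" if y: "y \<in> topspace X" "w x y < min e (\<eta>/2)" for y
  proof -
    have ry: "retr y \<in> A" "w y (retr y) \<le> 2 * distA y" using retr_in_A_close[OF y(1)] True by auto
    have "w x (retr y) \<le> max (w x y) (w y (retr y))"
      using w_ultra[OF x _ y(1)] ry(1) A_subset by blast
    moreover have "w y (retr y) < \<eta>"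
      using ry(2) distA_le[OF True, of y] w_sym[of x y] y(2) by linarith
    ultimately have "w x (retr y) < \<eta>" using y(2) w_nonneg[of x y] by linarith
    then have "d (retr x) (retr y) < e" using \<eta>(2) ry(1) retr_id[OF True] by simp
    then show ?thesis using f_collapse_dist_le_w[of x y] y unfolding extend_eq[OF x y(1)] by simp
  qed
  moreover have "min e (\<eta>/2) > 0" using \<eta>(1) e by simp
  ultimately show ?thesis using that by blast
qed

lemma w_small_if_extend_small:
  assumes d: "d \<in> Ult (subtopology X A) S" and x: "x \<in> topspace X" and e: "e > 0"
  obtains \<eta> where "\<eta> > 0" "\<And>y. y \<in> topspace X \<Longrightarrow> extend d x y < \<eta> \<Longrightarrow> w x y < e"
proof (cases "x \<in> A")
  case False
  have "w x y < e" if y: "y \<in> topspace X" "extend d x y < f (min e (distA x))" for y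
  proof -
    have "f (collapse_dist x y) < f (min e (distA x))" using y unfolding extend_eq[OF x y(1)] by simp
    then have "collapse_dist x y < min e (distA x)" by (rule f_less_imp_less)
    then show ?thesis using collapse_dist_eq_w[of x y] by simp
  qed
  moreover have "0 < f (min e (distA x))" using f_pos distA_pos[OF x False] e by simp
  ultimately show ?thesis using that by blast
next
  case True
  obtain \<eta> where \<eta>: "\<eta> > 0" "\<And>b. b \<in> A \<Longrightarrow> d x b < \<eta> \<Longrightarrow> w x b < e"
    using small_on_A_imp_w_small[OF d True e] by blast
  have "w x y < e" if y: "y \<in> topspace X" "extend d x y < min \<eta> (f (e/2))" for y
  proof -
    have ry: "retr y \<in> A" "w y (retr y) \<le> 2 * distA y" using retr_in_A_close[OF y(1)] True by auto
    have "d x (retr y) < \<eta>" using y retr_id[OF True] unfolding extend_eq[OF x y(1)] by simp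
    then have x_ry: "w x (retr y) < e" using \<eta>(2) ry(1) by blast
    have "f (collapse_dist x y) < f (e/2)" using y unfolding extend_eq[OF x y(1)] by simp
    then have "collapse_dist x y < e/2" by (rule f_less_imp_less)
    then have small: "w x y < e/2 \<or> distA y < e/2"
      unfolding collapse_dist_def distA_eq_0[OF True] using distA_nonneg[of y] by linarith
    show ?thesis
    proof (cases "w x y < e/2")
      case False
      then have "w (retr y) y < e" using small ry(2) w_sym[of y "retr y"] by linarith
      then show ?thesis
        using le_less_trans[OF w_ultra[OF x y(1), of "retr y"]] ry(1) A_subset x_ry by auto
    qed (use e in linarith)
  qed
  moreover have "min \<eta> (f (e/2)) > 0" using \<eta>(1) f_pos[of "e/2"] e by simp
  ultimately show ?thesis using that by blast
qed

lemma extend_in_Ult: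
  assumes "d \<in> Ult (subtopology X A) S"
  shows "extend d \<in> Ult X S"
proof -
  have "generates_topology X (extend d)"
  proof (rule generates_topology_transfer[OF w_generates])
    fix x and e :: real assume "x \<in> topspace X" "e > 0"
    then show "\<exists>\<eta>>0. \<forall>y\<in>topspace X. extend d x y < \<eta> \<longrightarrow> w x y < e"
      by (metis w_small_if_extend_small[OF assms])
    show "\<exists>\<eta>>0. \<forall>y\<in>topspace X. w x y < \<eta> \<longrightarrow> extend d x y < e"
      using \<open>x \<in> topspace X\<close> \<open>e > 0\<close> by (metis extend_small_if_w_small[OF assms])
  qed
  then show ?thesis
    using S_ultrametric_extend[OF Ult_A_S_ultrametric[OF assms]] unfolding Ult_def by blast
qed

lemma extend_Cauchy_converges_near_A:
  assumes d: "d \<in> Ult (subtopology X A) S" "complete_on A d"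
    and y: "range y \<subseteq> topspace X" "Cauchy_wrt (extend d) y"
    and near: "\<forall>\<epsilon>>0. \<exists>N. \<forall>n\<ge>N. distA (y n) < \<epsilon>"
  shows "\<exists>l\<in>topspace X. converges_wrt (extend d) y l"
proof -
  have yX: "y n \<in> topspace X" for n using y(1) by auto
  have "A \<noteq> {}"
    using near[rule_format, of 1] unfolding distA_def by force
  then have ryA: "range (retr \<circ> y) \<subseteq> A" using retr_in_A_close[OF yX] by auto
  have "Cauchy_wrt d (retr \<circ> y)"
    using y(2) unfolding Cauchy_wrt_def extend_eq[OF yX yX] by (fastforce simp: max_less_iff_conj)
  then obtain a where a: "a \<in> A" "converges_wrt d (retr \<circ> y) a"
    using d(2) ryA unfolding complete_on_iff by blast
  have aX: "a \<in> topspace X" using a(1) A_subset by auto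
  have close: "extend d (y n) a < \<epsilon>" if "d (retr (y n)) a < \<epsilon>" "distA (y n) < \<epsilon>" for n \<epsilon>
  proof -
    have "collapse_dist (y n) a \<le> distA (y n)"
      unfolding collapse_dist_def using distA_eq_0[OF a(1)] distA_nonneg[of "y n"] by simp
    then have "f (collapse_dist (y n) a) < \<epsilon>"
      using f_le[OF collapse_dist_nonneg, of "y n" a] that(2) by linarith
    then show ?thesis using that(1) retr_id[OF a(1)] unfolding extend_eq[OF yX aX] by simp
  qed
  have "converges_wrt (extend d) y a"
    unfolding converges_wrt_def
  proof (intro allI impI)
    fix \<epsilon> :: real assume "\<epsilon> > 0"
    obtain N\<^sub>1 where "\<forall>n\<ge>N\<^sub>1. d (retr (y n)) a < \<epsilon>"
      using a(2) \<open>\<epsilon> > 0\<close> unfolding converges_wrt_def by auto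
    moreover obtain N\<^sub>2 where "\<forall>n\<ge>N\<^sub>2. distA (y n) < \<epsilon>" using near \<open>\<epsilon> > 0\<close> by blast
    ultimately have "\<forall>n\<ge>max N\<^sub>1 N\<^sub>2. extend d (y n) a < \<epsilon>" using close by simp
    then show "\<exists>N. \<forall>n\<ge>N. extend d (y n) a < \<epsilon>" by blast
  qed
  then show ?thesis using aX by blast
qed

lemma extend_Cauchy_imp_w_Cauchy_away_from_A:
  assumes y: "range y \<subseteq> topspace X" "Cauchy_wrt (extend d) y"
    and far: "\<epsilon>\<^sub>0 > 0" "\<forall>N. \<exists>n\<ge>N. \<epsilon>\<^sub>0 \<le> distA (y n)"
  shows "Cauchy_wrt w y"
proof -
  have yX: "y n \<in> topspace X" for n using y(1) by auto
  have collapse_less: "collapse_dist (y m) (y n) < t" if "extend d (y m) (y n) < f t" for m n t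
    using that f_less_imp_less unfolding extend_eq[OF yX yX] by simp
  obtain N where N: "\<forall>m\<ge>N. \<forall>n\<ge>N. extend d (y m) (y n) < f \<epsilon>\<^sub>0"
    using y(2) f_pos[OF far(1)] unfolding Cauchy_wrt_def by blast
  obtain n\<^sub>0 where n\<^sub>0: "n\<^sub>0 \<ge> N" "\<epsilon>\<^sub>0 \<le> distA (y n\<^sub>0)" using far(2) by blast
  have distA_ge: "\<epsilon>\<^sub>0 \<le> distA (y m)" if "m \<ge> N" for m
  proof -
    have "collapse_dist (y n\<^sub>0) (y m) < distA (y n\<^sub>0)"
      using collapse_less N n\<^sub>0 that by (meson less_le_trans)
    then have "w (y n\<^sub>0) (y m) < distA (y n\<^sub>0)" using collapse_dist_eq_w by simp
    then show ?thesis using distA_eq_if_close[OF yX yX] n\<^sub>0(2) by simp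
  qed
  show ?thesis
    unfolding Cauchy_wrt_def
  proof (intro allI impI)
    fix e :: real assume "e > 0"
    then obtain N' where N': "\<forall>m\<ge>N'. \<forall>n\<ge>N'. extend d (y m) (y n) < f (min e \<epsilon>\<^sub>0)"
      using y(2) f_pos far(1) unfolding Cauchy_wrt_def by (metis min_less_iff_conj)
    have "w (y m) (y n) < e" if "m \<ge> max N N'" "n \<ge> max N N'" for m n
    proof -
      have "collapse_dist (y m) (y n) < min e \<epsilon>\<^sub>0" using collapse_less N' that by force
      moreover have "\<epsilon>\<^sub>0 \<le> distA (y m)" using distA_ge that by simp
      ultimately show ?thesis using collapse_dist_eq_w[of "y m" "y n"] by simp
    qed
    then show "\<exists>N. \<forall>m\<ge>N. \<forall>n\<ge>N. w (y m) (y n) < e" by blast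
  qed
qed

lemma converges_wrt_extend:
  assumes "d \<in> Ult (subtopology X A) S" "l \<in> topspace X" "range y \<subseteq> topspace X"
    and "converges_wrt w y l"
  shows "converges_wrt (extend d) y l"
  unfolding converges_wrt_def
proof (intro allI impI)
  fix \<epsilon> :: real assume "\<epsilon> > 0"
  then obtain \<eta> where \<eta>: "\<eta> > 0" "\<And>z. z \<in> topspace X \<Longrightarrow> w l z < \<eta> \<Longrightarrow> extend d l z < \<epsilon>"
    using extend_small_if_w_small[OF assms(1,2)] by blast
  obtain N where "\<forall>n\<ge>N. w l (y n) < \<eta>"
    using assms(4) \<eta>(1) w_sym unfolding converges_wrt_def by metis
  then have "\<forall>n\<ge>N. extend d (y n) l < \<epsilon>"
    using \<eta>(2) assms(3) S_ultrametric_sym[OF S_ultrametric_extend[OF Ult_A_S_ultrametric[OF assms(1)]]]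
    by (metis range_subsetD)
  then show "\<exists>N. \<forall>n\<ge>N. extend d (y n) l < \<epsilon>" by blast
qed

lemma extend_complete:
  assumes "complete_on (topspace X) w" "d \<in> Ult (subtopology X A) S" "complete_on A d"
  shows "complete_on (topspace X) (extend d)"
  unfolding complete_on_iff
proof (intro allI impI)
  fix y assume y: "range y \<subseteq> topspace X" "Cauchy_wrt (extend d) y"
  show "\<exists>l\<in>topspace X. converges_wrt (extend d) y l"
  proof (cases "\<forall>\<epsilon>>0. \<exists>N. \<forall>n\<ge>N. distA (y n) < \<epsilon>")
    case True
    then show ?thesis using extend_Cauchy_converges_near_A[OF assms(2,3) y] by blast
  next
    case False
    then obtain \<epsilon>\<^sub>0 where "\<epsilon>\<^sub>0 > 0" "\<forall>N. \<exists>n\<ge>N. \<epsilon>\<^sub>0 \<le> distA (y n)" by (meson not_le)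
    then have "Cauchy_wrt w y" using extend_Cauchy_imp_w_Cauchy_away_from_A[OF y] by blast
    then obtain l where "l \<in> topspace X" "converges_wrt w y l"
      using assms(1) y(1) unfolding complete_on_iff by blast
    then show ?thesis using converges_wrt_extend[OF assms(2) _ y(1)] by blast
  qed
qed

end

definition ultrametric_extension_operator ::
    "real set \<Rightarrow> 'a topology \<Rightarrow> 'a set \<Rightarrow> ('a dfun \<Rightarrow> 'a dfun) \<Rightarrow> bool" where
  "ultrametric_extension_operator S X A \<Upsilon> \<longleftrightarrow>
     (\<forall>d\<in>Ult (subtopology X A) S. \<Upsilon> d \<in> Ult X S) \<and>
     (\<forall>d1\<in>Ult (subtopology X A) S. \<forall>d2\<in>Ult (subtopology X A) S.
        UD S (topspace X) (\<Upsilon> d1) (\<Upsilon> d2) = UD S A d1 d2) \<and>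
     (\<forall>d\<in>Ult (subtopology X A) S. \<forall>a\<in>A. \<forall>b\<in>A. \<Upsilon> d a b = d a b) \<and>
     (\<forall>d1\<in>Ult (subtopology X A) S. \<forall>d2\<in>Ult (subtopology X A) S.
        (\<forall>a\<in>A. \<forall>b\<in>A. d1 a b \<le> d2 a b) \<longrightarrow>
        (\<forall>x\<in>topspace X. \<forall>y\<in>topspace X. \<Upsilon> d1 x y \<le> \<Upsilon> d2 x y)) \<and>
     (\<forall>d\<in>Ult (subtopology X A) S. \<forall>e\<in>Ult (subtopology X A) S.
        \<Upsilon> (dmax d e) = dmax (\<Upsilon> d) (\<Upsilon> e))"

lemma ultrametric_extension_operator_exists:
  assumes "characteristic S" "w \<in> Ult X {0..}" "closedin X A"
  obtains \<Upsilon> where "ultrametric_extension_operator S X A \<Upsilon>"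
    and "complete_on (topspace X) w \<Longrightarrow>
      \<forall>d\<in>Ult (subtopology X A) S. complete_on A d \<longrightarrow> complete_on (topspace X) (\<Upsilon> d)"
proof -
  obtain f where "mono f" "f 0 = 0" "\<And>t. 0 < t \<Longrightarrow> 0 < f t"
    "\<And>t. 0 \<le> t \<Longrightarrow> f t \<in> S" "\<And>t. 0 \<le> t \<Longrightarrow> f t \<le> t"
    using characteristic_gauge[OF assms(1)] by blast
  with assms interpret ultrametric_extension X w A S f
    by unfold_locales (auto simp: Ult_def)
  show ?thesis
  proof (rule that[of extend])
    show "ultrametric_extension_operator S X A extend"
      unfolding ultrametric_extension_operator_def
      using extend_in_Ult UD_extend extend_on_A extend_mono extend_dmax Ult_A_S_ultrametric by simp
  qed (use extend_complete in blast)
qed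

theorem theorem1p11:
  fixes S :: "real set" and X :: "'a topology" and A :: "'a set"
  assumes "characteristic S" and "ultrametrizable X" and "closedin X A"
  shows "(\<exists>\<Upsilon>. (\<forall>d\<in>Ult (subtopology X A) S. \<Upsilon> d \<in> Ult X S) \<and>
            (\<forall>d1\<in>Ult (subtopology X A) S. \<forall>d2\<in>Ult (subtopology X A) S.
               UD S (topspace X) (\<Upsilon> d1) (\<Upsilon> d2) = UD S A d1 d2) \<and>
            (\<forall>d\<in>Ult (subtopology X A) S. \<forall>a\<in>A. \<forall>b\<in>A. \<Upsilon> d a b = d a b) \<and>
            (\<forall>d1\<in>Ult (subtopology X A) S. \<forall>d2\<in>Ult (subtopology X A) S.
               (\<forall>a\<in>A. \<forall>b\<in>A. d1 a b \<le> d2 a b) \<longrightarrow>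
               (\<forall>x\<in>topspace X. \<forall>y\<in>topspace X. \<Upsilon> d1 x y \<le> \<Upsilon> d2 x y)) \<and>
            (\<forall>d\<in>Ult (subtopology X A) S. \<forall>e\<in>Ult (subtopology X A) S.
               \<Upsilon> (dmax d e) = dmax (\<Upsilon> d) (\<Upsilon> e)))
       \<and> (completely_metrizable_space X \<longrightarrow>
          (\<exists>\<Upsilon>. (\<forall>d\<in>Ult (subtopology X A) S. \<Upsilon> d \<in> Ult X S) \<and>
            (\<forall>d1\<in>Ult (subtopology X A) S. \<forall>d2\<in>Ult (subtopology X A) S.
               UD S (topspace X) (\<Upsilon> d1) (\<Upsilon> d2) = UD S A d1 d2) \<and>
            (\<forall>d\<in>Ult (subtopology X A) S. \<forall>a\<in>A. \<forall>b\<in>A. \<Upsilon> d a b = d a b) \<and>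
            (\<forall>d1\<in>Ult (subtopology X A) S. \<forall>d2\<in>Ult (subtopology X A) S.
               (\<forall>a\<in>A. \<forall>b\<in>A. d1 a b \<le> d2 a b) \<longrightarrow>
               (\<forall>x\<in>topspace X. \<forall>y\<in>topspace X. \<Upsilon> d1 x y \<le> \<Upsilon> d2 x y)) \<and>
            (\<forall>d\<in>Ult (subtopology X A) S. \<forall>e\<in>Ult (subtopology X A) S.
               \<Upsilon> (dmax d e) = dmax (\<Upsilon> d) (\<Upsilon> e)) \<and>
            (\<forall>d\<in>Ult (subtopology X A) S. complete_on A d \<longrightarrow>
               complete_on (topspace X) (\<Upsilon> d))))"
proof -
  obtain w where w: "w \<in> Ult X {0..}" using assms(2) unfolding ultrametrizable_def by blast
  have extension: "\<exists>\<Upsilon>. ultrametric_extension_operator S X A \<Upsilon>"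
    using ultrametric_extension_operator_exists[OF assms(1) w assms(3)] by metis
  have complete_extension: "\<exists>\<Upsilon>. ultrametric_extension_operator S X A \<Upsilon> \<and>
      (\<forall>d\<in>Ult (subtopology X A) S. complete_on A d \<longrightarrow> complete_on (topspace X) (\<Upsilon> d))"
    if cm: "completely_metrizable_space X"
  proof -
    obtain u where u: "u \<in> Ult X {0..}" "complete_on (topspace X) u"
      using completely_metrizable_complete_ultrametric[OF w cm] by blast
    then show ?thesis using ultrametric_extension_operator_exists[OF assms(1) u(1) assms(3)] by metis
  qed
  show ?thesis
    using conjI[OF extension impI[OF complete_extension]]
    unfolding ultrametric_extension_operator_def conj_assoc .
qed

end
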